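(* Let $G$ be a graph whose $\operatorname{IR}$-graph $H=G(\operatorname{IR})$ is connected. Let $X=\{x_1,\dots,x_r\}$ be an $\operatorname{IR}(G)$-set such that exactly three vertices $x_1,x_2,x_3$ have positive degree in $G[X]$. For $i=1,2,3$ let $x_i'\in\operatorname{EPN}(x_i,X)$, and let $X'=(X-\{x_1,x_2,x_3\})\cup\{x_1',x_2',x_3'\}$. If $d_H(X,X')=3$, then $H$ contains an induced $4$-cycle, or $H$ contains an induced subgraph isomorphic to the double star $S(2,2)$ in which $X$ and $X'$ are leaves at distance $3$ from each other (antipodal leaves).
   Context: All graphs are finite and simple. For $G=(V,E)$, $D\subseteq V$, $v\in D$: $\operatorname{PN}(v,D)=N[v]-N[D-\{v\}]$ and $\operatorname{EPN}(v,D)=\operatorname{PN}(v,D)-D$. $D$ is irredundant if $\operatorname{PN}(v,D)\neq\varnothing$ for all $v\in D$; $\operatorname{IR}(G)$ is the maximum size of an irredundant set; an $\operatorname{IR}(G)$-set is an irredundant set of that size. $G(\operatorname{IR})$ has the $\operatorname{IR}(G)$-sets as vertices, with $D\sim D'$ iff there exist $u\in D$, $v\in D'$ with $uv\in E(G)$ and $D'=(D-\{u\})\cup\{v\}$. $d_H$ is distance in $H$. The double star $S(2,2)$ is the tree obtained by joining the centres of two copies of $K_{1,2}$ by an edge (6 vertices, diameter 3). *)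

theory Defs
  imports Main
begin

definition graph :: "'a set \<Rightarrow> ('a \<Rightarrow> 'a \<Rightarrow> bool) \<Rightarrow> bool" where
  "graph V adj \<longleftrightarrow> finite V \<and> (\<forall>u v. adj u v \<longrightarrow> u \<in> V \<and> v \<in> V)
     \<and> (\<forall>u v. adj u v \<longrightarrow> adj v u) \<and> (\<forall>v. \<not> adj v v)"

definition cnbhd :: "'a set \<Rightarrow> ('a \<Rightarrow> 'a \<Rightarrow> bool) \<Rightarrow> 'a \<Rightarrow> 'a set" where
  "cnbhd V adj v = {u \<in> V. u = v \<or> adj v u}"

definition cnbhd_set :: "'a set \<Rightarrow> ('a \<Rightarrow> 'a \<Rightarrow> bool) \<Rightarrow> 'a set \<Rightarrow> 'a set" where
  "cnbhd_set V adj S = (\<Union>v\<in>S. cnbhd V adj v)"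

definition PN :: "'a set \<Rightarrow> ('a \<Rightarrow> 'a \<Rightarrow> bool) \<Rightarrow> 'a \<Rightarrow> 'a set \<Rightarrow> 'a set" where
  "PN V adj v D = cnbhd V adj v - cnbhd_set V adj (D - {v})"

definition EPN :: "'a set \<Rightarrow> ('a \<Rightarrow> 'a \<Rightarrow> bool) \<Rightarrow> 'a \<Rightarrow> 'a set \<Rightarrow> 'a set" where
  "EPN V adj v D = PN V adj v D - D"

definition irredundant :: "'a set \<Rightarrow> ('a \<Rightarrow> 'a \<Rightarrow> bool) \<Rightarrow> 'a set \<Rightarrow> bool" where
  "irredundant V adj D \<longleftrightarrow> D \<subseteq> V \<and> (\<forall>v\<in>D. PN V adj v D \<noteq> {})"

definition IR :: "'a set \<Rightarrow> ('a \<Rightarrow> 'a \<Rightarrow> bool) \<Rightarrow> nat" where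
  "IR V adj = Max (card ` {D. irredundant V adj D})"

definition IR_set :: "'a set \<Rightarrow> ('a \<Rightarrow> 'a \<Rightarrow> bool) \<Rightarrow> 'a set \<Rightarrow> bool" where
  "IR_set V adj D \<longleftrightarrow> irredundant V adj D \<and> card D = IR V adj"

definition IR_graph_V :: "'a set \<Rightarrow> ('a \<Rightarrow> 'a \<Rightarrow> bool) \<Rightarrow> 'a set set" where
  "IR_graph_V V adj = {D. IR_set V adj D}"

definition IR_graph_adj :: "'a set \<Rightarrow> ('a \<Rightarrow> 'a \<Rightarrow> bool) \<Rightarrow> 'a set \<Rightarrow> 'a set \<Rightarrow> bool" where
  "IR_graph_adj V adj D D' \<longleftrightarrow> IR_set V adj D \<and> IR_set V adj D' \<and>
     (\<exists>u\<in>D. \<exists>v\<in>D'. adj u v \<and> D' = (D - {u}) \<union> {v})"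

fun walkn :: "'b set \<Rightarrow> ('b \<Rightarrow> 'b \<Rightarrow> bool) \<Rightarrow> nat \<Rightarrow> 'b \<Rightarrow> 'b \<Rightarrow> bool" where
  "walkn W a 0 x y = (x = y \<and> x \<in> W)"
| "walkn W a (Suc n) x y = (x \<in> W \<and> (\<exists>z\<in>W. a x z \<and> walkn W a n z y))"

definition connected_graph :: "'b set \<Rightarrow> ('b \<Rightarrow> 'b \<Rightarrow> bool) \<Rightarrow> bool" where
  "connected_graph W a \<longleftrightarrow> (\<forall>x\<in>W. \<forall>y\<in>W. \<exists>n. walkn W a n x y)"

definition gdist :: "'b set \<Rightarrow> ('b \<Rightarrow> 'b \<Rightarrow> bool) \<Rightarrow> 'b \<Rightarrow> 'b \<Rightarrow> nat" where
  "gdist W a x y = (LEAST n. walkn W a n x y)"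

definition has_induced_C4 :: "'b set \<Rightarrow> ('b \<Rightarrow> 'b \<Rightarrow> bool) \<Rightarrow> bool" where
  "has_induced_C4 W a \<longleftrightarrow> (\<exists>p q r s. p \<in> W \<and> q \<in> W \<and> r \<in> W \<and> s \<in> W \<and>
     distinct [p, q, r, s] \<and> a p q \<and> a q r \<and> a r s \<and> a s p \<and> \<not> a p r \<and> \<not> a q s)"

definition has_induced_S22_antipodal :: "'b set \<Rightarrow> ('b \<Rightarrow> 'b \<Rightarrow> bool) \<Rightarrow> 'b \<Rightarrow> 'b \<Rightarrow> bool" where
  "has_induced_S22_antipodal W a x y \<longleftrightarrow> (\<exists>c1 c2 l1 l2.
     x \<in> W \<and> y \<in> W \<and> c1 \<in> W \<and> c2 \<in> W \<and> l1 \<in> W \<and> l2 \<in> W \<and>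
     distinct [x, l1, c1, c2, l2, y] \<and>
     (\<forall>u\<in>{x, l1, c1, c2, l2, y}. \<forall>v\<in>{x, l1, c1, c2, l2, y}.
        a u v \<longleftrightarrow> {u, v} \<in> {{x, c1}, {l1, c1}, {c1, c2}, {c2, l2}, {c2, y}}))"

end

theory Submission
  imports Defs
begin

(* A geodesic X, D1, D2, X' in the IR-graph exchanges one vertex per step, and counting shows
   that it exchanges x1, x2, x3 for their private neighbours one at a time, in some order a, b, c:
   X = {a, b, c} \<union> W, then {a', b, c} \<union> W, {a', b', c} \<union> W, {a', b', c'} \<union> W = X'.
   Since W is isolated in G[X] and no vertex in play is adjacent to W, a set T \<union> W with |T| = 3
   is again an IR-set as soon as each vertex of T has a private neighbour relative to T alone.
   If {a, b', c} \<union> W is such a set it closes an induced 4-cycle through X, otherwise ac is an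
   edge; by the symmetry of the configuration under reversing the path, likewise for
   {a', b, c'} \<union> W and the edge a'c'. The edges bc and a'b' then decide: if exactly one is
   present, a private neighbour of a' (or of c) yields another induced 4-cycle; otherwise two
   further IR-sets hang off the inner vertices of the path as the leaves of an induced S(2,2)
   with X and X' antipodal. *)

lemma graph_adj_sym: "graph V adj \<Longrightarrow> adj u v \<Longrightarrow> adj v u"
  by (auto simp: graph_def)

lemma graph_not_adj_self: "graph V adj \<Longrightarrow> \<not> adj v v"
  by (auto simp: graph_def)

lemma mem_cnbhd_set_iff: "y \<in> cnbhd_set V adj S \<longleftrightarrow> y \<in> V \<and> (\<exists>t\<in>S. y = t \<or> adj t y)"
  by (auto simp: cnbhd_set_def cnbhd_def)

lemma mem_PN_iff:
  "y \<in> PN V adj v D \<longleftrightarrow> y \<in> V \<and> (y = v \<or> adj v y) \<and> (\<forall>t\<in>D - {v}. y \<noteq> t \<and> \<not> adj t y)"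
  by (auto simp: PN_def cnbhd_def cnbhd_set_def)

lemma mem_EPN_iff:
  "y \<in> EPN V adj v D \<longleftrightarrow> y \<in> PN V adj v D \<and> y \<notin> D"
  by (simp add: EPN_def)

lemma EPN_owner_unique: "y \<in> EPN V adj x D \<Longrightarrow> u \<in> D \<Longrightarrow> adj u y \<Longrightarrow> u = x"
  by (auto simp: EPN_def mem_PN_iff)

lemma PN_Un_eq: "v \<notin> W \<Longrightarrow> PN V adj v (S \<union> W) = PN V adj v S - cnbhd_set V adj W"
  by (auto simp: mem_PN_iff mem_cnbhd_set_iff)

lemma irredundant_UnI:
  assumes "S \<subseteq> V" "W \<subseteq> V" "S \<inter> W = {}"
    and "\<forall>v\<in>S. PN V adj v S - cnbhd_set V adj W \<noteq> {}"
    and "\<forall>w\<in>W. PN V adj w W - cnbhd_set V adj S \<noteq> {}"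
  shows "irredundant V adj (S \<union> W)"
proof -
  have "PN V adj v (S \<union> W) \<noteq> {}" if "v \<in> S \<union> W" for v
  proof (cases "v \<in> S")
    case True
    then have "v \<notin> W" using assms(3) by blast
    with True assms(4) show ?thesis by (simp add: PN_Un_eq)
  next
    case False
    with that have "v \<in> W" by blast
    with False assms(5) show ?thesis using PN_Un_eq[of v S V adj W] by (simp add: Un_commute)
  qed
  with assms(1,2) show ?thesis by (auto simp: irredundant_def)
qed

lemma card_3_subset_eq:
  assumes "A \<subseteq> {u1, u2, u3}" "card A = 3"
  shows "A = {u1, u2, u3} \<and> distinct [u1, u2, u3]"
proof -
  have "card {u1, u2, u3} \<le> 3"
    by (simp add: card_insert_le_m1)
  moreover have "card A \<le> card {u1, u2, u3}"
    using assms(1) by (simp add: card_mono)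
  ultimately have "card {u1, u2, u3} = 3"
    using assms(2) by simp
  then show ?thesis
    using assms card_subset_eq[OF _ assms(1)] by (auto simp: card_insert_if split: if_splits)
qed

lemma three_exchanges_diff:
  assumes "D1 = insert a' (X - {a})" "D2 = insert b' (D1 - {b})" "X' = insert c' (D2 - {c})"
    and "card (X - X') = 3" "card (X' - X) = 3"
  shows "X - X' = {a, b, c} \<and> distinct [a, b, c]" "X' - X = {a', b', c'} \<and> distinct [a', b', c']"
proof -
  have "X - X' \<subseteq> {a, b, c}" "X' - X \<subseteq> {a', b', c'}"
    using assms(1-3) by auto
  from card_3_subset_eq[OF this(1) assms(4)] card_3_subset_eq[OF this(2) assms(5)]
  show "X - X' = {a, b, c} \<and> distinct [a, b, c]"
    "X' - X = {a', b', c'} \<and> distinct [a', b', c']" .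
qed

lemma EPN_adj: "y \<in> EPN V adj x D \<Longrightarrow> x \<in> D \<Longrightarrow> adj x y"
  by (auto simp: mem_EPN_iff mem_PN_iff)

lemma has_induced_C4I:
  assumes "\<And>x y. a x y \<Longrightarrow> x \<in> W \<and> y \<in> W" and "irreflp a"
    and "a p q" "a q r" "a r s" "a s p"
    and "p \<noteq> r \<and> \<not> a p r" "q \<noteq> s \<and> \<not> a q s"
  shows "has_induced_C4 W a"
proof -
  have "distinct [p, q, r, s]"
    using assms(2-8) by (auto dest: irreflpD)
  with assms show ?thesis
    unfolding has_induced_C4_def by blast
qed

lemma has_induced_S22_antipodalI:
  assumes on_W: "\<And>u v. a u v \<Longrightarrow> u \<in> W \<and> v \<in> W" and "symp a" "irreflp a"
    and edges: "a x c1" "a l1 c1" "a c1 c2" "a c2 l2" "a c2 y"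
    and apart: "x \<noteq> l1 \<and> \<not> a x l1" "x \<noteq> c2 \<and> \<not> a x c2" "x \<noteq> l2 \<and> \<not> a x l2"
      "x \<noteq> y \<and> \<not> a x y" "l1 \<noteq> c2 \<and> \<not> a l1 c2" "l1 \<noteq> l2 \<and> \<not> a l1 l2"
      "l1 \<noteq> y \<and> \<not> a l1 y" "c1 \<noteq> l2 \<and> \<not> a c1 l2" "c1 \<noteq> y \<and> \<not> a c1 y"
      "l2 \<noteq> y \<and> \<not> a l2 y"
  shows "has_induced_S22_antipodal W a x y"
proof -
  have edges': "a c1 x" "a c1 l1" "a c2 c1" "a l2 c2" "a y c2"
    using edges \<open>symp a\<close> by (auto dest: sympD)
  have apart': "\<not> a l1 x" "\<not> a c2 x" "\<not> a l2 x" "\<not> a y x" "\<not> a c2 l1" "\<not> a l2 l1"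
      "\<not> a y l1" "\<not> a l2 c1" "\<not> a y c1" "\<not> a y l2"
    using apart \<open>symp a\<close> by (auto dest: sympD)
  have loops: "\<not> a v v" for v
    using \<open>irreflp a\<close> by (rule irreflpD)
  have distinct: "distinct [x, l1, c1, c2, l2, y]"
    using edges apart loops by auto
  have induced: "\<forall>u\<in>{x, l1, c1, c2, l2, y}. \<forall>v\<in>{x, l1, c1, c2, l2, y}.
      a u v \<longleftrightarrow> {u, v} \<in> {{x, c1}, {l1, c1}, {c1, c2}, {c2, l2}, {c2, y}}"
    using edges edges' apart apart' loops distinct
    by (intro ballI, elim insertE emptyE) (auto simp: doubleton_eq_iff)
  have members: "x \<in> W" "l1 \<in> W" "c1 \<in> W" "c2 \<in> W" "l2 \<in> W" "y \<in> W"
    using on_W edges by blast+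
  show ?thesis
    unfolding has_induced_S22_antipodal_def
    by (rule exI[of _ c1], rule exI[of _ c2], rule exI[of _ l1], rule exI[of _ l2])
      (use members distinct induced in blast)
qed

lemma IR_set_finite: "graph V adj \<Longrightarrow> IR_set V adj D \<Longrightarrow> finite D"
  unfolding IR_set_def irredundant_def graph_def using finite_subset by blast

lemma IR_graph_adjI:
  "IR_set V adj D \<Longrightarrow> IR_set V adj D' \<Longrightarrow> u \<in> D \<Longrightarrow> adj u v \<Longrightarrow> D' = insert v (D - {u})
    \<Longrightarrow> IR_graph_adj V adj D D'"
  unfolding IR_graph_adj_def by blast

lemma IR_graph_adj_exchange:
  assumes "graph V adj" "IR_graph_adj V adj D D'"
  obtains u v where "u \<in> D" "v \<notin> D" "adj u v" "D' = insert v (D - {u})"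
proof -
  obtain u v where uv: "u \<in> D" "adj u v" "D' = insert v (D - {u})"
    and IR: "IR_set V adj D" "IR_set V adj D'"
    using assms(2) unfolding IR_graph_adj_def by blast
  have "v \<notin> D"
  proof
    assume "v \<in> D"
    moreover have "v \<noteq> u"
      using uv(2) graph_not_adj_self[OF assms(1)] by blast
    ultimately have "D' = D - {u}"
      using uv(3) by blast
    then have "card D' < card D"
      using card_Diff1_less[OF IR_set_finite[OF assms(1) IR(1)] uv(1)] by simp
    with IR show False
      unfolding IR_set_def by simp
  qed
  with uv that show ?thesis by blast
qed

lemma IR_graph_adj_in_V:
  "IR_graph_adj V adj D D' \<Longrightarrow> D \<in> IR_graph_V V adj \<and> D' \<in> IR_graph_V V adj"
  unfolding IR_graph_adj_def IR_graph_V_def by blast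

lemma symp_IR_graph_adj: "graph V adj \<Longrightarrow> symp (IR_graph_adj V adj)"
proof (rule sympI)
  fix D D' assume G: "graph V adj" and DD': "IR_graph_adj V adj D D'"
  obtain u v where "u \<in> D" "v \<notin> D" "adj u v" "D' = insert v (D - {u})"
    using IR_graph_adj_exchange[OF G DD'] .
  moreover have "IR_set V adj D" "IR_set V adj D'"
    using DD' unfolding IR_graph_adj_def by blast+
  ultimately show "IR_graph_adj V adj D' D"
    using graph_adj_sym[OF G] by (intro IR_graph_adjI[where u = v and v = u]) auto
qed

lemma irreflp_IR_graph_adj: "graph V adj \<Longrightarrow> irreflp (IR_graph_adj V adj)"
  unfolding irreflp_def IR_graph_adj_def using graph_not_adj_self by fastforce

lemma IR_graph_apart_of_two_removed:
  "x \<in> D - D' \<Longrightarrow> y \<in> D - D' \<Longrightarrow> x \<noteq> y \<Longrightarrow> D \<noteq> D' \<and> \<not> IR_graph_adj V adj D D'"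
  unfolding IR_graph_adj_def by blast

lemma IR_graph_apart_of_not_adj:
  "x \<in> D - D' \<Longrightarrow> y \<in> D' - D \<Longrightarrow> \<not> adj x y \<Longrightarrow> D \<noteq> D' \<and> \<not> IR_graph_adj V adj D D'"
  unfolding IR_graph_adj_def by blast

lemma walkn_gdist:
  "connected_graph W a \<Longrightarrow> x \<in> W \<Longrightarrow> y \<in> W \<Longrightarrow> walkn W a (gdist W a x y) x y"
  unfolding connected_graph_def gdist_def by (metis LeastI_ex)

lemma walkn_3E:
  assumes "walkn W a 3 x y"
  obtains p q where "p \<in> W" "q \<in> W" "a x p" "a p q" "a q y"
  using assms by (auto simp: numeral_3_eq_3)

lemma IR_graph_three_exchanges:
  assumes G: "graph V adj"
    and xs: "x1 \<in> X" "x2 \<in> X" "x3 \<in> X" "distinct [x1, x2, x3]"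
    and EPN: "x1' \<in> EPN V adj x1 X" "x2' \<in> EPN V adj x2 X" "x3' \<in> EPN V adj x3 X"
    and X': "X' = (X - {x1, x2, x3}) \<union> {x1', x2', x3'}"
    and path: "IR_graph_adj V adj X D1" "IR_graph_adj V adj D1 D2" "IR_graph_adj V adj D2 X'"
  obtains a b c a' b' c' where "{a, b, c} = {x1, x2, x3}" "distinct [a, b, c]"
    "a' \<in> EPN V adj a X" "b' \<in> EPN V adj b X" "c' \<in> EPN V adj c X"
    "D1 = {a', b, c} \<union> (X - {x1, x2, x3})" "D2 = {a', b', c} \<union> (X - {x1, x2, x3})"
    "X' = {a', b', c'} \<union> (X - {x1, x2, x3})"
proof -
  obtain a a' where a_step: "a \<in> X" "a' \<notin> X" "adj a a'" "D1 = insert a' (X - {a})"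
    using IR_graph_adj_exchange[OF G path(1)] .
  obtain b b' where b_step: "b \<in> D1" "b' \<notin> D1" "adj b b'" "D2 = insert b' (D1 - {b})"
    using IR_graph_adj_exchange[OF G path(2)] .
  obtain c c' where c_step: "c \<in> D2" "c' \<notin> D2" "adj c c'" "X' = insert c' (D2 - {c})"
    using IR_graph_adj_exchange[OF G path(3)] .
  have x'_notin_X: "x1' \<notin> X" "x2' \<notin> X" "x3' \<notin> X"
    using EPN by (simp_all add: mem_EPN_iff)
  have "x1' \<noteq> x2'" "x1' \<noteq> x3'" "x2' \<noteq> x3'"
    using EPN_owner_unique[OF EPN(1) xs(2)] EPN_owner_unique[OF EPN(1) xs(3)]
      EPN_owner_unique[OF EPN(2) xs(3)] EPN_adj[OF EPN(2) xs(2)] EPN_adj[OF EPN(3) xs(3)] xs(4)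
    by auto
  moreover have diff: "X - X' = {x1, x2, x3}" "X' - X = {x1', x2', x3'}"
    using X' xs x'_notin_X by auto
  ultimately have "card (X - X') = 3" "card (X' - X) = 3"
    using xs(4) by simp_all
  with diff have abc: "{a, b, c} = {x1, x2, x3}" "distinct [a, b, c]"
    and primes: "{a', b', c'} = {x1', x2', x3'}"
    using three_exchanges_diff[OF a_step(4) b_step(4) c_step(4)] by simp_all
  have owner: "y \<in> EPN V adj u X" if y: "y \<in> {x1', x2', x3'}" and u: "u \<in> X" "adj u y" for u y
  proof -
    obtain x where "y \<in> EPN V adj x X"
      using y EPN by blast
    with u show ?thesis
      using EPN_owner_unique by metis
  qed
  have "{a, b, c} \<subseteq> X"
    unfolding abc(1) using xs by simp
  moreover have "{a', b', c'} \<subseteq> {x1', x2', x3'}"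
    by (simp add: primes(1))
  ultimately have in_X: "a \<in> X" "b \<in> X" "c \<in> X"
    and primes_in: "a' \<in> {x1', x2', x3'}" "b' \<in> {x1', x2', x3'}" "c' \<in> {x1', x2', x3'}"
    by simp_all
  show ?thesis
  proof (rule that[OF abc])
    show "a' \<in> EPN V adj a X" "b' \<in> EPN V adj b X" "c' \<in> EPN V adj c X"
      using owner[OF primes_in(1) in_X(1) a_step(3)] owner[OF primes_in(2) in_X(2) b_step(3)]
        owner[OF primes_in(3) in_X(3) c_step(3)] .
    have "a' \<notin> X" "b' \<notin> X"
      using primes_in x'_notin_X by blast+
    then show "D1 = {a', b, c} \<union> (X - {x1, x2, x3})" "D2 = {a', b', c} \<union> (X - {x1, x2, x3})"
      "X' = {a', b', c'} \<union> (X - {x1, x2, x3})"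
      unfolding abc(1)[symmetric] using a_step(4) b_step(4) c_step(4) in_X abc(2) by auto
  qed
qed

lemma IR_graph_induced_C4I:
  assumes "graph V adj"
    and "IR_graph_adj V adj D0 D1" "IR_graph_adj V adj D1 D2"
      "IR_graph_adj V adj D2 D3" "IR_graph_adj V adj D3 D0"
    and "D0 \<noteq> D2 \<and> \<not> IR_graph_adj V adj D0 D2" "D1 \<noteq> D3 \<and> \<not> IR_graph_adj V adj D1 D3"
  shows "has_induced_C4 (IR_graph_V V adj) (IR_graph_adj V adj)"
  by (rule has_induced_C4I[OF IR_graph_adj_in_V irreflp_IR_graph_adj[OF assms(1)] assms(2-)])

lemma IR_graph_induced_S22I:
  assumes "graph V adj"
    and "IR_graph_adj V adj x c1" "IR_graph_adj V adj l1 c1" "IR_graph_adj V adj c1 c2"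
      "IR_graph_adj V adj c2 l2" "IR_graph_adj V adj c2 y"
    and "x \<noteq> l1 \<and> \<not> IR_graph_adj V adj x l1" "x \<noteq> c2 \<and> \<not> IR_graph_adj V adj x c2"
      "x \<noteq> l2 \<and> \<not> IR_graph_adj V adj x l2" "x \<noteq> y \<and> \<not> IR_graph_adj V adj x y"
      "l1 \<noteq> c2 \<and> \<not> IR_graph_adj V adj l1 c2" "l1 \<noteq> l2 \<and> \<not> IR_graph_adj V adj l1 l2"
      "l1 \<noteq> y \<and> \<not> IR_graph_adj V adj l1 y" "c1 \<noteq> l2 \<and> \<not> IR_graph_adj V adj c1 l2"
      "c1 \<noteq> y \<and> \<not> IR_graph_adj V adj c1 y" "l2 \<noteq> y \<and> \<not> IR_graph_adj V adj l2 y"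
  shows "has_induced_S22_antipodal (IR_graph_V V adj) (IR_graph_adj V adj) x y"
  by (rule has_induced_S22_antipodalI[OF IR_graph_adj_in_V symp_IR_graph_adj[OF assms(1)]
        irreflp_IR_graph_adj[OF assms(1)] assms(2-)])

locale exchange_path =
  fixes V :: "'a set" and adj :: "'a \<Rightarrow> 'a \<Rightarrow> bool" and W :: "'a set"
    and a b c a' b' c' :: 'a
  assumes graph: "graph V adj"
    and distinct_abc: "distinct [a, b, c]"
    and abc_notin_W: "a \<notin> W" "b \<notin> W" "c \<notin> W"
    and W_isolated: "\<forall>w\<in>W. \<forall>y\<in>{a, b, c} \<union> W. \<not> adj w y"
    and EPN: "a' \<in> EPN V adj a ({a, b, c} \<union> W)" "b' \<in> EPN V adj b ({a, b, c} \<union> W)"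
      "c' \<in> EPN V adj c ({a, b, c} \<union> W)"
    and IR_path: "IR_set V adj ({a, b, c} \<union> W)" "IR_set V adj ({a', b, c} \<union> W)"
      "IR_set V adj ({a', b', c} \<union> W)" "IR_set V adj ({a', b', c'} \<union> W)"
begin

definition avoids_W :: "'a \<Rightarrow> bool" where
  "avoids_W v \<longleftrightarrow> v \<in> V \<and> v \<notin> W \<and> (\<forall>w\<in>W. \<not> adj w v)"

definition private_for :: "'a \<Rightarrow> 'a \<Rightarrow> 'a \<Rightarrow> 'a \<Rightarrow> bool" where
  "private_for y p q r \<longleftrightarrow>
     avoids_W y \<and> (y = p \<or> adj p y) \<and> y \<noteq> q \<and> y \<noteq> r \<and> \<not> adj q y \<and> \<not> adj r y"

lemma adj_sym: "adj u v \<Longrightarrow> adj v u"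
  using graph by (rule graph_adj_sym)

lemma not_adj_self: "\<not> adj v v"
  using graph by (rule graph_not_adj_self)

lemma private_for_iff_PN:
  "distinct [p, q, r] \<Longrightarrow> p \<notin> W \<Longrightarrow> private_for y p q r \<longleftrightarrow> y \<in> PN V adj p ({p, q, r} \<union> W)"
  by (auto simp: private_for_def avoids_W_def PN_Un_eq mem_PN_iff mem_cnbhd_set_iff)

lemma obtain_private_for:
  assumes "IR_set V adj ({p, q, r} \<union> W)" "distinct [p, q, r]" "p \<notin> W"
  obtains y where "private_for y p q r"
proof -
  have "PN V adj p ({p, q, r} \<union> W) \<noteq> {}"
    using assms(1) unfolding IR_set_def irredundant_def by simp
  then obtain y where "y \<in> PN V adj p ({p, q, r} \<union> W)"
    by blast
  with assms(2,3) that show ?thesis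
    by (simp add: private_for_iff_PN)
qed

lemma IR_set_triple:
  assumes "distinct [p, q, r]" "avoids_W p" "avoids_W q" "avoids_W r"
    and "private_for yp p q r" "private_for yq q p r" "private_for yr r p q"
  shows "IR_set V adj ({p, q, r} \<union> W)"
proof -
  have W: "finite W" "W \<subseteq> V"
    using IR_set_finite[OF graph IR_path(1)] IR_path(1) unfolding IR_set_def irredundant_def by auto
  have "yp \<in> PN V adj p {p, q, r} - cnbhd_set V adj W"
    "yq \<in> PN V adj q {p, q, r} - cnbhd_set V adj W"
    "yr \<in> PN V adj r {p, q, r} - cnbhd_set V adj W"
    using assms(1,5-7) by (auto simp: private_for_def avoids_W_def mem_PN_iff mem_cnbhd_set_iff)
  then have PN_triple: "\<forall>v\<in>{p, q, r}. PN V adj v {p, q, r} - cnbhd_set V adj W \<noteq> {}"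
    by blast
  have PN_W: "\<forall>w\<in>W. PN V adj w W - cnbhd_set V adj {p, q, r} \<noteq> {}"
  proof
    fix w assume "w \<in> W"
    then have "w \<in> PN V adj w W - cnbhd_set V adj {p, q, r}"
      using W W_isolated assms(2-4)
      by (auto simp: avoids_W_def mem_PN_iff mem_cnbhd_set_iff dest: adj_sym)
    then show "PN V adj w W - cnbhd_set V adj {p, q, r} \<noteq> {}"
      by blast
  qed
  have "irredundant V adj ({p, q, r} \<union> W)"
    by (rule irredundant_UnI[OF _ W(2) _ PN_triple PN_W]) (use assms(2-4) in \<open>auto simp: avoids_W_def\<close>)
  moreover have "card ({p, q, r} \<union> W) = card ({a, b, c} \<union> W)"
    using W assms(1-4) distinct_abc abc_notin_W by (simp add: avoids_W_def)
  ultimately show ?thesis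
    using IR_path(1) unfolding IR_set_def by simp
qed

lemma private_for_primes: "private_for a' a b c" "private_for b' b a c" "private_for c' c a b"
proof -
  have "{b, a, c} = {a, b, c}" "{c, a, b} = {a, b, c}" "distinct [b, a, c]" "distinct [c, a, b]"
    using distinct_abc by auto
  then show "private_for a' a b c" "private_for b' b a c" "private_for c' c a b"
    using EPN distinct_abc abc_notin_W private_for_iff_PN[of a b c a'] private_for_iff_PN[of b a c b']
      private_for_iff_PN[of c a b c'] by (simp_all add: mem_EPN_iff)
qed

lemma avoids_W_vertices:
  "avoids_W a" "avoids_W b" "avoids_W c" "avoids_W a'" "avoids_W b'" "avoids_W c'"
proof -
  have "{a, b, c} \<subseteq> V"
    using IR_path(1) unfolding IR_set_def irredundant_def by blast
  with W_isolated abc_notin_W show "avoids_W a" "avoids_W b" "avoids_W c"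
    unfolding avoids_W_def by blast+
  show "avoids_W a'" "avoids_W b'" "avoids_W c'"
    using private_for_primes unfolding private_for_def by blast+
qed

lemma adj_primes: "adj a a'" "adj b b'" "adj c c'" "adj a' a" "adj b' b" "adj c' c"
proof -
  have "a' \<noteq> a" "b' \<noteq> b" "c' \<noteq> c"
    using EPN by (auto simp: mem_EPN_iff)
  then show "adj a a'" "adj b b'" "adj c c'"
    using private_for_primes unfolding private_for_def by blast+
  then show "adj a' a" "adj b' b" "adj c' c"
    by (blast intro: adj_sym)+
qed

lemma not_adj_primes:
  "\<not> adj b a'" "\<not> adj c a'" "\<not> adj a b'" "\<not> adj c b'" "\<not> adj a c'" "\<not> adj b c'"
  "\<not> adj a' b" "\<not> adj a' c" "\<not> adj b' a" "\<not> adj b' c" "\<not> adj c' a" "\<not> adj c' b"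
proof -
  show "\<not> adj b a'" "\<not> adj c a'" "\<not> adj a b'" "\<not> adj c b'" "\<not> adj a c'" "\<not> adj b c'"
    using private_for_primes unfolding private_for_def by blast+
  then show "\<not> adj a' b" "\<not> adj a' c" "\<not> adj b' a" "\<not> adj b' c" "\<not> adj c' a" "\<not> adj c' b"
    by (blast dest: adj_sym)+
qed

lemma vertices_ne:
  "a \<noteq> b" "a \<noteq> c" "b \<noteq> c" "a' \<noteq> b'" "a' \<noteq> c'" "b' \<noteq> c'"
  "a \<noteq> a'" "a \<noteq> b'" "a \<noteq> c'" "b \<noteq> a'" "b \<noteq> b'" "b \<noteq> c'"
  "c \<noteq> a'" "c \<noteq> b'" "c \<noteq> c'"
  using distinct_abc private_for_primes adj_primes not_adj_primes not_adj_self
  unfolding private_for_def by auto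

lemma vertices_notin_W: "a \<notin> W" "b \<notin> W" "c \<notin> W" "a' \<notin> W" "b' \<notin> W" "c' \<notin> W"
  using avoids_W_vertices by (auto simp: avoids_W_def)

lemmas configuration =
  avoids_W_vertices adj_primes not_adj_primes vertices_ne vertices_notin_W

lemma path_edges:
  "IR_graph_adj V adj ({a, b, c} \<union> W) ({a', b, c} \<union> W)"
  "IR_graph_adj V adj ({a', b, c} \<union> W) ({a', b', c} \<union> W)"
  "IR_graph_adj V adj ({a', b', c} \<union> W) ({a', b', c'} \<union> W)"
proof -
  show "IR_graph_adj V adj ({a, b, c} \<union> W) ({a', b, c} \<union> W)"
    by (rule IR_graph_adjI[OF IR_path(1,2), where u = a and v = a']) (use configuration in auto)
  show "IR_graph_adj V adj ({a', b, c} \<union> W) ({a', b', c} \<union> W)"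
    by (rule IR_graph_adjI[OF IR_path(2,3), where u = b and v = b']) (use configuration in auto)
  show "IR_graph_adj V adj ({a', b', c} \<union> W) ({a', b', c'} \<union> W)"
    by (rule IR_graph_adjI[OF IR_path(3,4), where u = c and v = c']) (use configuration in auto)
qed

lemma induced_C4_if_IR_set_a_b'_c:
  assumes IR_b: "IR_set V adj ({a, b', c} \<union> W)"
  shows "has_induced_C4 (IR_graph_V V adj) (IR_graph_adj V adj)"
proof -
  have "IR_graph_adj V adj ({a', b', c} \<union> W) ({a, b', c} \<union> W)"
    by (rule IR_graph_adjI[OF IR_path(3) IR_b, where u = a' and v = a]) (use configuration in auto)
  moreover have "IR_graph_adj V adj ({a, b', c} \<union> W) ({a, b, c} \<union> W)"
    by (rule IR_graph_adjI[OF IR_b IR_path(1), where u = b' and v = b]) (use configuration in auto)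
  moreover have "{a, b, c} \<union> W \<noteq> {a', b', c} \<union> W \<and>
      \<not> IR_graph_adj V adj ({a, b, c} \<union> W) ({a', b', c} \<union> W)"
    by (rule IR_graph_apart_of_two_removed[of a _ _ b]) (use configuration in auto)
  moreover have "{a', b, c} \<union> W \<noteq> {a, b', c} \<union> W \<and>
      \<not> IR_graph_adj V adj ({a', b, c} \<union> W) ({a, b', c} \<union> W)"
    by (rule IR_graph_apart_of_two_removed[of a' _ _ b]) (use configuration in auto)
  ultimately show ?thesis
    using IR_graph_induced_C4I[OF graph path_edges(1,2)] by blast
qed

lemma adj_a_c_if_not_IR_set_a_b'_c:
  assumes "\<not> IR_set V adj ({a, b', c} \<union> W)"
  shows "adj a c"
proof (rule ccontr)
  assume "\<not> adj a c"
  then have "\<not> adj c a"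
    using adj_sym by blast
  with \<open>\<not> adj a c\<close> have "IR_set V adj ({a, b', c} \<union> W)"
    by (intro IR_set_triple[where yp = a and yq = b' and yr = c])
      (use configuration in \<open>auto simp: private_for_def\<close>)
  with assms show False
    by blast
qed

lemma induced_C4_if_adj_a'_b':
  assumes "\<not> adj b c" "adj a' b'"
  shows "has_induced_C4 (IR_graph_V V adj) (IR_graph_adj V adj)"
proof -
  obtain z where z: "private_for z a' b' c"
    using IR_path(3) by (rule obtain_private_for) (use configuration in auto)
  have "z \<noteq> a'"
    using z assms(2) adj_sym unfolding private_for_def by blast
  then have z_adj: "adj a' z" "adj z a'"
    using z adj_sym unfolding private_for_def by blast+
  then have "z \<noteq> b"
    using not_adj_primes by blast
  have z_not_adj: "\<not> adj z b'" "\<not> adj z c"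
    using z adj_sym unfolding private_for_def by blast+
  have "z \<notin> W"
    using z unfolding private_for_def avoids_W_def by blast
  note facts = configuration z_adj z_not_adj \<open>z \<noteq> a'\<close> \<open>z \<noteq> b\<close> \<open>z \<notin> W\<close> z[unfolded private_for_def]
  have "\<not> adj c b"
    using assms(1) adj_sym by blast
  have IR_Y2: "IR_set V adj ({z, b', c} \<union> W)"
    by (rule IR_set_triple[where yp = z and yq = b' and yr = c])
      (use facts in \<open>auto simp: private_for_def\<close>)
  have IR_Y1: "IR_set V adj ({z, b, c} \<union> W)"
    by (rule IR_set_triple[where yp = a' and yq = b' and yr = c])
      (use facts assms(1) \<open>\<not> adj c b\<close> in \<open>auto simp: private_for_def\<close>)
  have "IR_graph_adj V adj ({a', b', c} \<union> W) ({z, b', c} \<union> W)"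
    by (rule IR_graph_adjI[OF IR_path(3) IR_Y2, where u = a' and v = z]) (use facts in auto)
  moreover have "IR_graph_adj V adj ({z, b', c} \<union> W) ({z, b, c} \<union> W)"
    by (rule IR_graph_adjI[OF IR_Y2 IR_Y1, where u = b' and v = b]) (use facts in auto)
  moreover have "IR_graph_adj V adj ({z, b, c} \<union> W) ({a', b, c} \<union> W)"
    by (rule IR_graph_adjI[OF IR_Y1 IR_path(2), where u = z and v = a']) (use facts in auto)
  moreover have "{a', b, c} \<union> W \<noteq> {z, b', c} \<union> W \<and>
      \<not> IR_graph_adj V adj ({a', b, c} \<union> W) ({z, b', c} \<union> W)"
    by (rule IR_graph_apart_of_two_removed[of a' _ _ b]) (use facts in auto)
  moreover have "{a', b', c} \<union> W \<noteq> {z, b, c} \<union> W \<and>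
      \<not> IR_graph_adj V adj ({a', b', c} \<union> W) ({z, b, c} \<union> W)"
    by (rule IR_graph_apart_of_two_removed[of a' _ _ b']) (use facts in auto)
  ultimately show ?thesis
    using IR_graph_induced_C4I[OF graph path_edges(2)] by blast
qed

lemma induced_S22_if_not_adj_b_c_not_adj_a'_b':
  assumes "adj a c" "adj a' c'" "\<not> adj b c" "\<not> adj a' b'"
  shows "has_induced_S22_antipodal (IR_graph_V V adj) (IR_graph_adj V adj)
    ({a, b, c} \<union> W) ({a', b', c'} \<union> W)"
proof -
  have sym: "adj c a" "adj c' a'" "\<not> adj c b" "\<not> adj b' a'"
    using assms adj_sym by blast+
  note facts = configuration assms sym
  have IR_l1: "IR_set V adj ({a', b, a} \<union> W)"
    by (rule IR_set_triple[where yp = c' and yq = b' and yr = c])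
      (use facts in \<open>auto simp: private_for_def\<close>)
  have IR_l2: "IR_set V adj ({c', b', c} \<union> W)"
    by (rule IR_set_triple[where yp = a' and yq = b and yr = a])
      (use facts in \<open>auto simp: private_for_def\<close>)
  have l1_edge: "IR_graph_adj V adj ({a', b, a} \<union> W) ({a', b, c} \<union> W)"
    by (rule IR_graph_adjI[OF IR_l1 IR_path(2), where u = a and v = c]) (use facts in auto)
  have l2_edge: "IR_graph_adj V adj ({a', b', c} \<union> W) ({c', b', c} \<union> W)"
    by (rule IR_graph_adjI[OF IR_path(3) IR_l2, where u = a' and v = c']) (use facts in auto)
  have apart_l1: "{a, b, c} \<union> W \<noteq> {a', b, a} \<union> W \<and>
      \<not> IR_graph_adj V adj ({a, b, c} \<union> W) ({a', b, a} \<union> W)"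
    by (rule IR_graph_apart_of_not_adj[of c _ _ a']) (use facts in auto)
  have apart_ab: "{a, b, c} \<union> W \<noteq> {a', b', c} \<union> W \<and>
      \<not> IR_graph_adj V adj ({a, b, c} \<union> W) ({a', b', c} \<union> W)"
    "{a, b, c} \<union> W \<noteq> {c', b', c} \<union> W \<and>
      \<not> IR_graph_adj V adj ({a, b, c} \<union> W) ({c', b', c} \<union> W)"
    "{a, b, c} \<union> W \<noteq> {a', b', c'} \<union> W \<and>
      \<not> IR_graph_adj V adj ({a, b, c} \<union> W) ({a', b', c'} \<union> W)"
    "{a', b, a} \<union> W \<noteq> {a', b', c} \<union> W \<and>
      \<not> IR_graph_adj V adj ({a', b, a} \<union> W) ({a', b', c} \<union> W)"
    "{a', b, a} \<union> W \<noteq> {a', b', c'} \<union> W \<and>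
      \<not> IR_graph_adj V adj ({a', b, a} \<union> W) ({a', b', c'} \<union> W)"
    by (rule IR_graph_apart_of_two_removed[of a _ _ b]; use facts in auto)+
  have apart_l1_l2: "{a', b, a} \<union> W \<noteq> {c', b', c} \<union> W \<and>
      \<not> IR_graph_adj V adj ({a', b, a} \<union> W) ({c', b', c} \<union> W)"
    by (rule IR_graph_apart_of_two_removed[of a' _ _ a]) (use facts in auto)
  have apart_a'_b: "{a', b, c} \<union> W \<noteq> {c', b', c} \<union> W \<and>
      \<not> IR_graph_adj V adj ({a', b, c} \<union> W) ({c', b', c} \<union> W)"
    by (rule IR_graph_apart_of_two_removed[of a' _ _ b]) (use facts in auto)
  have apart_b_c: "{a', b, c} \<union> W \<noteq> {a', b', c'} \<union> W \<and>
      \<not> IR_graph_adj V adj ({a', b, c} \<union> W) ({a', b', c'} \<union> W)"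
    by (rule IR_graph_apart_of_two_removed[of b _ _ c]) (use facts in auto)
  have apart_l2: "{c', b', c} \<union> W \<noteq> {a', b', c'} \<union> W \<and>
      \<not> IR_graph_adj V adj ({c', b', c} \<union> W) ({a', b', c'} \<union> W)"
    by (rule IR_graph_apart_of_not_adj[of c _ _ a']) (use facts in auto)
  show ?thesis
    by (rule IR_graph_induced_S22I[OF graph path_edges(1) l1_edge path_edges(2) l2_edge path_edges(3)
          apart_l1 apart_ab(1,2,3) apart_ab(4) apart_l1_l2 apart_ab(5) apart_a'_b apart_b_c apart_l2])
qed

lemma induced_S22_if_adj_b_c_adj_a'_b':
  assumes "adj a c" "adj a' c'" "adj b c" "adj a' b'"
  shows "has_induced_S22_antipodal (IR_graph_V V adj) (IR_graph_adj V adj)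
    ({a, b, c} \<union> W) ({a', b', c'} \<union> W)"
proof -
  have sym: "adj c a" "adj c' a'" "adj c b" "adj b' a'"
    using assms adj_sym by blast+
  have "IR_set V adj ({c, a', b} \<union> W)"
    using IR_path(2) by (simp add: insert_commute)
  then obtain z where z: "private_for z c a' b"
    by (rule obtain_private_for) (use configuration in auto)
  obtain u where u: "private_for u a' b' c"
    using IR_path(3) by (rule obtain_private_for) (use configuration in auto)
  have z_adj: "adj c z" "adj z c" and u_adj: "adj a' u" "adj u a'"
    using z u sym adj_sym unfolding private_for_def by blast+
  have z_not_adj: "\<not> adj z a'" "\<not> adj z b" and u_not_adj: "\<not> adj u b'" "\<not> adj u c"
    using z u adj_sym unfolding private_for_def by blast+
  have z_ne: "z \<noteq> a" "z \<noteq> b'" "z \<noteq> c'" and u_ne: "u \<noteq> a" "u \<noteq> b" "u \<noteq> c'"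
    using z u assms sym configuration unfolding private_for_def by blast+
  have "z \<notin> W" "u \<notin> W"
    using z u unfolding private_for_def avoids_W_def by blast+
  note facts = configuration z_adj u_adj z_not_adj u_not_adj z_ne u_ne \<open>z \<notin> W\<close> \<open>u \<notin> W\<close>
    z[unfolded private_for_def] u[unfolded private_for_def] not_adj_self
  have IR_l1: "IR_set V adj ({a', b, z} \<union> W)"
    by (rule IR_set_triple[where yp = a' and yq = b and yr = z])
      (use facts in \<open>auto simp: private_for_def\<close>)
  have IR_l2: "IR_set V adj ({u, b', c} \<union> W)"
    by (rule IR_set_triple[where yp = u and yq = b' and yr = c])
      (use facts in \<open>auto simp: private_for_def\<close>)
  have l1_edge: "IR_graph_adj V adj ({a', b, z} \<union> W) ({a', b, c} \<union> W)"
    by (rule IR_graph_adjI[OF IR_l1 IR_path(2), where u = z and v = c]) (use facts in auto)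
  have l2_edge: "IR_graph_adj V adj ({a', b', c} \<union> W) ({u, b', c} \<union> W)"
    by (rule IR_graph_adjI[OF IR_path(3) IR_l2, where u = a' and v = u]) (use facts in auto)
  have apart_l1: "{a, b, c} \<union> W \<noteq> {a', b, z} \<union> W \<and>
      \<not> IR_graph_adj V adj ({a, b, c} \<union> W) ({a', b, z} \<union> W)"
    by (rule IR_graph_apart_of_two_removed[of a _ _ c]) (use facts in auto)
  have apart_ab: "{a, b, c} \<union> W \<noteq> {a', b', c} \<union> W \<and>
      \<not> IR_graph_adj V adj ({a, b, c} \<union> W) ({a', b', c} \<union> W)"
    "{a, b, c} \<union> W \<noteq> {u, b', c} \<union> W \<and>
      \<not> IR_graph_adj V adj ({a, b, c} \<union> W) ({u, b', c} \<union> W)"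
    "{a, b, c} \<union> W \<noteq> {a', b', c'} \<union> W \<and>
      \<not> IR_graph_adj V adj ({a, b, c} \<union> W) ({a', b', c'} \<union> W)"
    by (rule IR_graph_apart_of_two_removed[of a _ _ b]; use facts in auto)+
  have apart_bz: "{a', b, z} \<union> W \<noteq> {a', b', c} \<union> W \<and>
      \<not> IR_graph_adj V adj ({a', b, z} \<union> W) ({a', b', c} \<union> W)"
    "{a', b, z} \<union> W \<noteq> {a', b', c'} \<union> W \<and>
      \<not> IR_graph_adj V adj ({a', b, z} \<union> W) ({a', b', c'} \<union> W)"
    by (rule IR_graph_apart_of_two_removed[of b _ _ z]; use facts in auto)+
  have apart_a'b: "{a', b, z} \<union> W \<noteq> {u, b', c} \<union> W \<and>
      \<not> IR_graph_adj V adj ({a', b, z} \<union> W) ({u, b', c} \<union> W)"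
    "{a', b, c} \<union> W \<noteq> {u, b', c} \<union> W \<and>
      \<not> IR_graph_adj V adj ({a', b, c} \<union> W) ({u, b', c} \<union> W)"
    by (rule IR_graph_apart_of_two_removed[of a' _ _ b]; use facts in auto)+
  have apart_bc: "{a', b, c} \<union> W \<noteq> {a', b', c'} \<union> W \<and>
      \<not> IR_graph_adj V adj ({a', b, c} \<union> W) ({a', b', c'} \<union> W)"
    by (rule IR_graph_apart_of_two_removed[of b _ _ c]) (use facts in auto)
  have apart_l2: "{u, b', c} \<union> W \<noteq> {a', b', c'} \<union> W \<and>
      \<not> IR_graph_adj V adj ({u, b', c} \<union> W) ({a', b', c'} \<union> W)"
    by (rule IR_graph_apart_of_two_removed[of u _ _ c]) (use facts in auto)
  show ?thesis
    by (rule IR_graph_induced_S22I[OF graph path_edges(1) l1_edge path_edges(2) l2_edge path_edges(3)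
          apart_l1 apart_ab apart_bz(1) apart_a'b(1) apart_bz(2) apart_a'b(2) apart_bc apart_l2])
qed

(* Read backwards from X', the path is again an instance of the configuration: e.g. c is an
   external private neighbour of c' with respect to {a', b', c'} \<union> W, since a' and b' are
   private to a and b. *)
lemma exchange_path_reversed: "exchange_path V adj W c' b' a' c b a"
proof
  show "graph V adj" by (rule graph)
  show "distinct [c', b', a']" "c' \<notin> W" "b' \<notin> W" "a' \<notin> W"
    using configuration by auto
  show "\<forall>w\<in>W. \<forall>y\<in>{c', b', a'} \<union> W. \<not> adj w y"
    using W_isolated avoids_W_vertices unfolding avoids_W_def by blast
  have "{c', b', a'} = {a', b', c'}" "distinct [c', b', a']" "distinct [b', c', a']" "distinct [a', c', b']"
    using configuration by auto
  then show "c \<in> EPN V adj c' ({c', b', a'} \<union> W)" "b \<in> EPN V adj b' ({c', b', a'} \<union> W)"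
    "a \<in> EPN V adj a' ({c', b', a'} \<union> W)"
    using private_for_iff_PN[of c' b' a' c] private_for_iff_PN[of b' c' a' b]
      private_for_iff_PN[of a' c' b' a] configuration
    by (auto simp: mem_EPN_iff private_for_def insert_commute)
  show "IR_set V adj ({c', b', a'} \<union> W)" "IR_set V adj ({c, b', a'} \<union> W)"
    "IR_set V adj ({c, b, a'} \<union> W)" "IR_set V adj ({c, b, a} \<union> W)"
    using IR_path by (simp_all add: insert_commute)
qed

theorem induced_C4_or_S22:
  "has_induced_C4 (IR_graph_V V adj) (IR_graph_adj V adj) \<or>
   has_induced_S22_antipodal (IR_graph_V V adj) (IR_graph_adj V adj)
     ({a, b, c} \<union> W) ({a', b', c'} \<union> W)"
proof -
  interpret reversed: exchange_path V adj W c' b' a' c b a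
    by (rule exchange_path_reversed)
  consider "IR_set V adj ({a, b', c} \<union> W)" | "IR_set V adj ({c', b, a'} \<union> W)"
    | "adj a c" "adj a' c'"
    using adj_a_c_if_not_IR_set_a_b'_c reversed.adj_a_c_if_not_IR_set_a_b'_c adj_sym by blast
  then show ?thesis
  proof cases
    case 1
    then show ?thesis by (simp add: induced_C4_if_IR_set_a_b'_c)
  next
    case 2
    then show ?thesis by (simp add: reversed.induced_C4_if_IR_set_a_b'_c)
  next
    case 3
    then show ?thesis
      using induced_C4_if_adj_a'_b' reversed.induced_C4_if_adj_a'_b' adj_sym
        induced_S22_if_not_adj_b_c_not_adj_a'_b' induced_S22_if_adj_b_c_adj_a'_b'
      by blast
  qed
qed

end

theorem lemma5p1:
  fixes V :: "'a set" and adj :: "'a \<Rightarrow> 'a \<Rightarrow> bool"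
    and X :: "'a set" and x1 x2 x3 x1' x2' x3' :: 'a
  assumes "graph V adj"
    and "connected_graph (IR_graph_V V adj) (IR_graph_adj V adj)"
    and "IR_set V adj X"
    and "x1 \<in> X" "x2 \<in> X" "x3 \<in> X" "distinct [x1, x2, x3]"
    and "{x \<in> X. \<exists>y\<in>X. adj x y} = {x1, x2, x3}"
    and "x1' \<in> EPN V adj x1 X" "x2' \<in> EPN V adj x2 X" "x3' \<in> EPN V adj x3 X"
    and "X' = (X - {x1, x2, x3}) \<union> {x1', x2', x3'}"
    and "X' \<in> IR_graph_V V adj"
    and "gdist (IR_graph_V V adj) (IR_graph_adj V adj) X X' = 3"
  shows "has_induced_C4 (IR_graph_V V adj) (IR_graph_adj V adj)
       \<or> has_induced_S22_antipodal (IR_graph_V V adj) (IR_graph_adj V adj) X X'"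
proof -
  have "X \<in> IR_graph_V V adj"
    using assms(3) by (simp add: IR_graph_V_def)
  then have "walkn (IR_graph_V V adj) (IR_graph_adj V adj) 3 X X'"
    using walkn_gdist[OF assms(2) _ assms(13)] assms(14) by metis
  then obtain D1 D2 where path: "IR_graph_adj V adj X D1" "IR_graph_adj V adj D1 D2"
      "IR_graph_adj V adj D2 X'"
    by (rule walkn_3E)
  then obtain a b c a' b' c' where abc: "{a, b, c} = {x1, x2, x3}" "distinct [a, b, c]"
    and EPN: "a' \<in> EPN V adj a X" "b' \<in> EPN V adj b X" "c' \<in> EPN V adj c X"
    and sets: "D1 = {a', b, c} \<union> (X - {x1, x2, x3})" "D2 = {a', b', c} \<union> (X - {x1, x2, x3})"
      "X' = {a', b', c'} \<union> (X - {x1, x2, x3})"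
    by (rule IR_graph_three_exchanges[OF assms(1,4-7,9-12)])
  define W where "W = X - {x1, x2, x3}"
  have X: "X = {a, b, c} \<union> W"
    using abc(1) assms(4-6) by (auto simp: W_def)
  interpret exchange_path V adj W a b c a' b' c'
  proof
    show "a \<notin> W" "b \<notin> W" "c \<notin> W"
      using abc(1) by (auto simp: W_def)
    show "\<forall>w\<in>W. \<forall>y\<in>{a, b, c} \<union> W. \<not> adj w y"
      using assms(8) X unfolding W_def by blast
    show "IR_set V adj ({a, b, c} \<union> W)" "IR_set V adj ({a', b, c} \<union> W)"
      "IR_set V adj ({a', b', c} \<union> W)" "IR_set V adj ({a', b', c'} \<union> W)"
      using assms(3) path sets X unfolding W_def IR_graph_adj_def by auto
  qed (use assms(1) abc(2) EPN X in simp_all)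
  have "X' = {a', b', c'} \<union> W"
    using sets(3) by (simp add: W_def)
  with X show ?thesis
    using induced_C4_or_S22 by simp
qed

end
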